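(* Suppose the budget and utility parameters of users are drawn i.i.d. from a distribution $\mathcal{D}$ such that (i) for each good $j$, $\mathbb{P}_{\mathcal{D}}(u_j>0)>0$, and (ii) the support satisfies $\mathbf{u}\in[\underline{\mathbf{u}},\bar{\mathbf{u}}]$ and $w\in[\underline w,\bar w]$ with $\underline{u},\underline w>0$. Let $\boldsymbol{\pi}$ be the revealed preference pricing policy described below, with allocations $\mathbf{x}_1,\dots,\mathbf{x}_n$. Then for step size $\gamma=\gamma_t=\bar D/\sqrt{n}$ for all $t\in[n]$, for some constant $\bar D>0$, the expected regret satisfies $R_n(\boldsymbol{\pi})\le O(\sqrt n)$ and the expected constraint violation satisfies $V_n(\boldsymbol{\pi})\le O(\sqrt n)$.
   Context: Online Fisher market: $m$ divisible goods, good $j$ with capacity $c_j=nd_j$, $\mathbf{d}>\mathbf{0}$; $n$ users arrive sequentially, user $t$ with budget $w_t$ and utility vector $\mathbf{u}_t$, $(w_t,\mathbf{u}_t)$ i.i.d. from $\mathcal{D}$. Given price $\mathbf{p}^t$, user $t$ consumes an optimal solution $\mathbf{x}_t$ of $\max\mathbf{u}_t^\top\mathbf{x}$ s.t. $(\mathbf{p}^t)^\top\mathbf{x}\le w_t$, $\mathbf{x}\ge\mathbf{0}$. Revealed preference algorithm: initialize $\mathbf{p}^1>\mathbf{0}$; for $t=1,\dots,n$, user $t$ consumes $\mathbf{x}_t$ at price $\mathbf{p}^t$, then $\mathbf{p}^{t+1}=\mathbf{p}^t-\gamma_t(\mathbf{d}-\mathbf{x}_t)$ (no projection). Offline optimum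 $U_n^*=\max\{\sum_t w_t\log(\sum_j u_{tj}x_{tj}):\sum_t x_{tj}\le c_j\ \forall j,\ x\ge0\}$; $U_n(\boldsymbol{\pi})=\sum_t w_t\log(\mathbf{u}_t^\top\mathbf{x}_t)$; $R_n(\boldsymbol{\pi})=\mathbb{E}[U_n^*-U_n(\boldsymbol{\pi})]$; $V_n(\boldsymbol{\pi})=\mathbb{E}[\|(\sum_t\mathbf{x}_t-\mathbf{c})_+\|_2]$. Asymptotics are as $n\to\infty$ with $m,\mathbf{d},\mathcal{D},\mathbf{p}^1,\bar D$ fixed. *)

theory Defs
  imports "HOL-Probability.Probability"
begin

text \<open>Goods are indexed by a finite type 'm; vectors in R^m are real^'m.
  A user type is a pair (w, u) of budget and utility vector.\<close>

definition optimal_consumption ::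
  "real^'m \<Rightarrow> real \<Rightarrow> real^'m \<Rightarrow> real^'m \<Rightarrow> bool" where
  "optimal_consumption p w u x \<longleftrightarrow>
     (\<forall>j. 0 \<le> x $ j) \<and> p \<bullet> x \<le> w \<and>
     (\<forall>y. (\<forall>j. 0 \<le> y $ j) \<and> p \<bullet> y \<le> w \<longrightarrow> u \<bullet> y \<le> u \<bullet> x)"

definition admissible_rule ::
  "(real^'m \<Rightarrow> real \<Rightarrow> real^'m \<Rightarrow> real^'m) \<Rightarrow> bool" where
  "admissible_rule sel \<longleftrightarrow>
     (\<forall>p w u. (\<exists>x. optimal_consumption p w u x) \<longrightarrow> optimal_consumption p w u (sel p w u)) \<and>
     (\<lambda>z. sel (fst z) (fst (snd z)) (snd (snd z))) \<in> borel_measurable borel"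

text \<open>Revealed preference prices: users indexed 0,1,...; omega t = (w_t, u_t).
  rp_price ... 0 is the initial price p^1.\<close>

fun rp_price ::
  "(real^'m \<Rightarrow> real \<Rightarrow> real^'m \<Rightarrow> real^'m) \<Rightarrow> real^'m \<Rightarrow> real^'m \<Rightarrow> real
   \<Rightarrow> (nat \<Rightarrow> real \<times> (real^'m)) \<Rightarrow> nat \<Rightarrow> real^'m" where
  "rp_price sel p1 d \<gamma> \<omega> 0 = p1"
| "rp_price sel p1 d \<gamma> \<omega> (Suc t) =
     rp_price sel p1 d \<gamma> \<omega> t
     - \<gamma> *\<^sub>R (d - sel (rp_price sel p1 d \<gamma> \<omega> t) (fst (\<omega> t)) (snd (\<omega> t)))"

definition rp_alloc ::
  "(real^'m \<Rightarrow> real \<Rightarrow> real^'m \<Rightarrow> real^'m) \<Rightarrow> real^'m \<Rightarrow> real^'m \<Rightarrow> real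
   \<Rightarrow> (nat \<Rightarrow> real \<times> (real^'m)) \<Rightarrow> nat \<Rightarrow> real^'m" where
  "rp_alloc sel p1 d \<gamma> \<omega> t = sel (rp_price sel p1 d \<gamma> \<omega> t) (fst (\<omega> t)) (snd (\<omega> t))"

text \<open>Offline optimum with capacities c_j = n d_j. Allocations with some
  u_t . x_t \<le> 0 are excluded (their objective is -infinity), which avoids
  Isabelle's convention for ln on nonpositive numbers.\<close>

definition offline_opt :: "real^'m \<Rightarrow> nat \<Rightarrow> (nat \<Rightarrow> real \<times> (real^'m)) \<Rightarrow> real" where
  "offline_opt d n \<omega> = Sup {(\<Sum>t<n. fst (\<omega> t) * ln (snd (\<omega> t) \<bullet> x t)) | x.
       (\<forall>t<n. \<forall>j. 0 \<le> x t $ j) \<and>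
       (\<forall>j. (\<Sum>t<n. x t $ j) \<le> real n * d $ j) \<and>
       (\<forall>t<n. 0 < snd (\<omega> t) \<bullet> x t)}"

definition online_util ::
  "(nat \<Rightarrow> real^'m) \<Rightarrow> nat \<Rightarrow> (nat \<Rightarrow> real \<times> (real^'m)) \<Rightarrow> real" where
  "online_util x n \<omega> = (\<Sum>t<n. fst (\<omega> t) * ln (snd (\<omega> t) \<bullet> x t))"

definition violation_vec :: "real^'m \<Rightarrow> (nat \<Rightarrow> real^'m) \<Rightarrow> nat \<Rightarrow> real^'m" where
  "violation_vec d x n = (\<chi> j. max 0 ((\<Sum>t<n. x t $ j) - real n * d $ j))"

definition rp_regret ::
  "(real \<times> (real^'m)) measure \<Rightarrow> (real^'m \<Rightarrow> real \<Rightarrow> real^'m \<Rightarrow> real^'m)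
   \<Rightarrow> real^'m \<Rightarrow> real^'m \<Rightarrow> real \<Rightarrow> nat \<Rightarrow> real" where
  "rp_regret D sel p1 d \<gamma> n =
     (\<integral>\<omega>. offline_opt d n \<omega> - online_util (rp_alloc sel p1 d \<gamma> \<omega>) n \<omega>
        \<partial>(PiM {..<n} (\<lambda>_. D)))"

definition rp_violation ::
  "(real \<times> (real^'m)) measure \<Rightarrow> (real^'m \<Rightarrow> real \<Rightarrow> real^'m \<Rightarrow> real^'m)
   \<Rightarrow> real^'m \<Rightarrow> real^'m \<Rightarrow> real \<Rightarrow> nat \<Rightarrow> real" where
  "rp_violation D sel p1 d \<gamma> n =
     (\<integral>\<omega>. norm (violation_vec d (rp_alloc sel p1 d \<gamma> \<omega>) n) \<partial>(PiM {..<n} (\<lambda>_. D)))"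

end

theory Submission
  imports Defs
begin

text \<open>The price update is projection-free subgradient descent on the dual of the
  Eisenberg-Gale program. With the per-user dual function
  \<open>dual_value p (w, u) = w ln (u \<bullet> x(p)) + p \<bullet> d - w\<close>, weak duality bounds the offline
  optimum by \<open>\<Sum>t. dual_value p (\<omega> t)\<close> for every fixed price \<open>p\<close>, while the online utility is
  \<open>\<Sum>t. dual_value p\<^sup>t (\<omega> t)\<close> minus \<open>\<Sum>t. p\<^sup>t \<bullet> d - w\<^sub>t \<le> \<Sum>t. p\<^sup>t \<bullet> (d - x\<^sub>t)\<close>, and the latter
  telescopes to \<open>O(1/\<gamma> + \<gamma> n)\<close>. As \<open>p\<^sup>t\<close> only depends on the users before \<open>t\<close>, the expectation
  of \<open>dual_value p\<^sup>t (\<omega> t)\<close> is at least the infimum of the expected dual function, so the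
  expected regret is \<open>O(1/\<gamma> + \<gamma> n)\<close>. The cumulative excess demand is
  \<open>(p\<^bsup>n+1\<^esup> - p\<^sup>1) / \<gamma>\<close>, hence \<open>O(1/\<gamma>)\<close>.

  Without projection, all this needs an a priori bound on the prices: \<open>\<Sum>j. 1 / p $ j\<close> stays
  bounded, because once some price is tiny, the user buys a good whose price is within a fixed
  factor of the tiny one in an amount far exceeding its supply, and that price rises by more
  than all the other prices can fall.\<close>

section \<open>Optimal consumption\<close>

lemma optimal_consumption_nonneg: "optimal_consumption p w u x \<Longrightarrow> 0 \<le> x $ j"
  unfolding optimal_consumption_def by blast

lemma optimal_consumption_budget: "optimal_consumption p w u x \<Longrightarrow> p \<bullet> x \<le> w"
  unfolding optimal_consumption_def by blast

lemma optimal_consumption_optimal: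
  "optimal_consumption p w u x \<Longrightarrow> \<forall>j. 0 \<le> y $ j \<Longrightarrow> p \<bullet> y \<le> w \<Longrightarrow> u \<bullet> y \<le> u \<bullet> x"
  unfolding optimal_consumption_def by blast

lemma optimal_consumption_spending_le:
  assumes "\<forall>i. 0 \<le> p $ i" "optimal_consumption p w u x"
  shows "p $ j * x $ j \<le> w"
proof -
  have "p $ j * x $ j \<le> (\<Sum>i\<in>UNIV. p $ i * x $ i)"
    using assms optimal_consumption_nonneg[OF assms(2)] by (intro member_le_sum) auto
  also have "\<dots> = p \<bullet> x" by (simp add: inner_vec_def)
  also have "\<dots> \<le> w" using optimal_consumption_budget[OF assms(2)] .
  finally show ?thesis .
qed

lemma optimal_consumption_component_le:
  assumes "\<forall>i. 0 \<le> p $ i" "0 < p $ j" "optimal_consumption p w u x"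
  shows "x $ j \<le> w / p $ j"
  using optimal_consumption_spending_le[OF assms(1,3), of j] assms(2)
  by (simp add: field_simps mult.commute)

lemma optimal_consumption_utility_ge:
  assumes p: "0 < p $ j" and w: "0 \<le> w" and oc: "optimal_consumption p w u x"
  shows "w * u $ j / p $ j \<le> u \<bullet> x"
proof -
  let ?y = "(w / p $ j) *\<^sub>R axis j (1::real)"
  have "\<forall>i. 0 \<le> ?y $ i" using p w by (simp add: axis_def)
  moreover have "p \<bullet> ?y = w" using p by (simp add: inner_axis)
  ultimately have "u \<bullet> ?y \<le> u \<bullet> x" by (intro optimal_consumption_optimal[OF oc]) auto
  moreover have "u \<bullet> axis j 1 = u $ j" by (rule cart_eq_inner_axis[symmetric])
  ultimately show ?thesis by simp
qed

lemma optimal_consumption_exists: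
  assumes p: "\<forall>j. 0 < p $ j" and w: "0 \<le> w" and u: "\<forall>j. 0 \<le> u $ j"
  shows "\<exists>x. optimal_consumption p w u x"
proof -
  define M where "M = Max (range (\<lambda>j. u $ j / p $ j))"
  have "M \<in> range (\<lambda>j. u $ j / p $ j)" unfolding M_def by (rule Max_in) auto
  then obtain k where k: "M = u $ k / p $ k" by auto
  have M_ge: "u $ j / p $ j \<le> M" for j unfolding M_def by (rule Max_ge) auto
  have M_nonneg: "0 \<le> M" using k p u by (simp add: less_imp_le)
  let ?x = "(w / p $ k) *\<^sub>R axis k (1::real)"
  have "u \<bullet> y \<le> u \<bullet> ?x" if y: "\<forall>j. 0 \<le> y $ j" and py: "p \<bullet> y \<le> w" for y
  proof -
    have "u \<bullet> y = (\<Sum>j\<in>UNIV. u $ j * y $ j)" by (simp add: inner_vec_def)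
    also have "\<dots> \<le> (\<Sum>j\<in>UNIV. M * (p $ j * y $ j))"
    proof (rule sum_mono)
      fix j
      have "u $ j \<le> M * p $ j" using M_ge[of j] p by (simp add: divide_le_eq)
      then show "u $ j * y $ j \<le> M * (p $ j * y $ j)"
        using y by (metis mult.assoc mult_right_mono)
    qed
    also have "\<dots> = M * (p \<bullet> y)" by (simp add: inner_vec_def sum_distrib_left)
    also have "\<dots> \<le> M * w" using M_nonneg py by (rule mult_left_mono[rotated])
    also have "\<dots> = u \<bullet> ?x" using k by (simp add: cart_eq_inner_axis)
    finally show ?thesis .
  qed
  moreover have "\<forall>i. 0 \<le> ?x $ i" using p w by (simp add: axis_def less_imp_le)
  moreover have "p \<bullet> ?x = w" using p[rule_format, of k] by (simp add: inner_axis)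
  ultimately have "optimal_consumption p w u ?x" unfolding optimal_consumption_def by auto
  then show ?thesis by blast
qed

text \<open>Weak duality for a single user: rescale \<open>y\<close> onto the budget line and use
  \<open>ln s \<le> s - 1\<close> for the scaling factor \<open>s\<close>.\<close>

lemma optimal_consumption_ln_le:
  assumes p: "\<forall>j. 0 < p $ j" and w: "0 < w" and oc: "optimal_consumption p w u x"
    and y: "\<forall>j. 0 \<le> y $ j" and uy: "0 < u \<bullet> y"
  shows "w * ln (u \<bullet> y) \<le> w * ln (u \<bullet> x) + p \<bullet> y - w"
proof -
  define s where "s = p \<bullet> y"
  have "y \<noteq> 0" using uy by auto
  then obtain i where "y $ i \<noteq> 0" by (auto simp: vec_eq_iff)
  then have "0 < p $ i * y $ i" using p y by (simp add: less_le)
  also have "\<dots> \<le> s"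
    unfolding s_def inner_vec_def inner_real_def using p y
    by (intro member_le_sum) (auto simp: less_imp_le)
  finally have s: "0 < s" .
  have "u \<bullet> ((w / s) *\<^sub>R y) \<le> u \<bullet> x"
    by (rule optimal_consumption_optimal[OF oc]) (use y w s in \<open>auto simp: s_def\<close>)
  then have le: "u \<bullet> y \<le> (s / w) * (u \<bullet> x)" using w s by (simp add: field_simps)
  then have "0 < (s / w) * (u \<bullet> x)" using uy by linarith
  then have ux: "0 < u \<bullet> x" using s w by (metis divide_pos_pos zero_less_mult_pos)
  have "ln (u \<bullet> y) \<le> ln ((s / w) * (u \<bullet> x))" using le uy by simp
  also have "\<dots> = ln (s / w) + ln (u \<bullet> x)" using s w ux by (subst ln_mult) auto
  also have "ln (s / w) \<le> s / w - 1" using s w by (intro ln_le_minus_one) simp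
  finally have "w * ln (u \<bullet> y) \<le> w * (s / w - 1 + ln (u \<bullet> x))" using w by simp
  also have "\<dots> = w * ln (u \<bullet> x) + s - w" using w by (simp add: field_simps)
  finally show ?thesis by (simp add: s_def)
qed

lemma optimal_consumption_heavy_good:
  fixes p u x :: "real^'m"
  assumes p: "\<forall>i. 0 < p $ i" and w: "0 < w" and a: "0 < a"
    and u: "\<forall>i. a \<le> u $ i \<and> u $ i \<le> A" and oc: "optimal_consumption p w u x"
  defines "c \<equiv> real CARD('m) * A / a"
  shows "\<exists>k. w / (c * p $ j) \<le> x $ k \<and> p $ k \<le> c * p $ j"
proof -
  have "Max (range (\<lambda>i. u $ i * x $ i)) \<in> range (\<lambda>i. u $ i * x $ i)" by (rule Max_in) auto
  then obtain k where k: "Max (range (\<lambda>i. u $ i * x $ i)) = u $ k * x $ k" by blast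
  have "w * a / p $ j \<le> w * u $ j / p $ j"
    using u w p by (intro divide_right_mono mult_left_mono) (auto simp: less_imp_le)
  also have "\<dots> \<le> u \<bullet> x" using optimal_consumption_utility_ge[OF _ _ oc] p w by simp
  also have "\<dots> = (\<Sum>i\<in>UNIV. u $ i * x $ i)" by (simp add: inner_vec_def)
  also have "\<dots> \<le> (\<Sum>i\<in>(UNIV::'m set). u $ k * x $ k)"
    by (rule sum_mono) (auto simp flip: k intro!: Max_ge)
  also have "\<dots> \<le> real CARD('m) * (A * x $ k)"
    using u optimal_consumption_nonneg[OF oc] by (simp add: mult_right_mono)
  finally have "w * a / p $ j \<le> real CARD('m) * (A * x $ k)" .
  moreover have A: "0 < A" using a u by (meson less_le_trans)
  moreover have m: "0 < real CARD('m)" by simp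
  ultimately have heavy: "w / (c * p $ j) \<le> x $ k"
    using a p unfolding c_def by (simp add: field_simps)
  have c: "0 < c" using a A m unfolding c_def by simp
  then have pos: "0 < w / (c * p $ j)" using p w by simp
  have "p $ k * (w / (c * p $ j)) \<le> p $ k * x $ k"
    using heavy p[rule_format, of k] by (intro mult_left_mono) auto
  also have "\<dots> \<le> w" using optimal_consumption_spending_le[OF _ oc] p by (simp add: less_imp_le)
  finally have "p $ k \<le> c * p $ j" using pos c p w by (simp add: field_simps)
  with heavy show ?thesis by blast
qed

lemma reciprocal_step_le:
  fixes q p x g \<delta> :: real
  assumes "0 < q" "q \<le> p" "0 \<le> x" "0 < g" "0 \<le> \<delta>" "g * \<delta> \<le> p / 2"
  shows "1 / (p + g * (x - \<delta>)) - 1 / p \<le> 2 * g * \<delta> / q^2"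
proof (cases "\<delta> \<le> x")
  case True
  then have "p \<le> p + g * (x - \<delta>)" using assms by simp
  then have "1 / (p + g * (x - \<delta>)) \<le> 1 / p" using assms by (intro divide_left_mono) auto
  moreover have "0 \<le> 2 * g * \<delta> / q^2" using assms by simp
  ultimately show ?thesis by linarith
next
  case False
  define p' where "p' = p + g * (x - \<delta>)"
  have "0 \<le> g * x" using assms by simp
  then have "p - p' \<le> g * \<delta>" "p / 2 \<le> p'" unfolding p'_def right_diff_distrib using assms by linarith+
  moreover have p: "0 < p" using assms by simp
  ultimately have p': "0 < p'" by linarith
  have "1 / p' - 1 / p = (p - p') / (p * p')" using p p' by (simp add: field_simps)
  also have "\<dots> \<le> (g * \<delta>) / (p * p')"
    using \<open>p - p' \<le> g * \<delta>\<close> p p' by (intro divide_right_mono) auto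
  also have "\<dots> \<le> (g * \<delta>) / (p * (p / 2))"
    by (rule divide_left_mono) (use p p' \<open>p / 2 \<le> p'\<close> assms in auto)
  also have "\<dots> = 2 * g * \<delta> / p^2" by (simp add: power2_eq_square)
  also have "\<dots> \<le> 2 * g * \<delta> / q^2"
    using False assms by (intro divide_left_mono power_mono) auto
  finally show ?thesis unfolding p'_def .
qed

lemma reciprocal_step_decrease:
  fixes q p x g \<delta> c :: real
  assumes "0 < q" "0 < p" "p \<le> c * q" "\<delta> \<le> x" "0 < g" "p + g * (x - \<delta>) \<le> 2 * c * q"
  shows "1 / (p + g * (x - \<delta>)) - 1 / p \<le> - (g * (x - \<delta>)) / (2 * c^2 * q^2)"
proof -
  define p' where "p' = p + g * (x - \<delta>)"
  have c: "0 < c" using zero_less_mult_pos2[of c q] assms by linarith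
  have N: "0 \<le> g * (x - \<delta>)" using assms by simp
  then have p': "0 < p'" unfolding p'_def using assms by linarith
  have "1 / p' - 1 / p = - (g * (x - \<delta>)) / (p * p')"
    using assms p' unfolding p'_def by (simp add: field_simps)
  also have "\<dots> \<le> - (g * (x - \<delta>)) / ((c * q) * (2 * c * q))"
    using N p' c assms unfolding p'_def
    by (intro divide_left_mono_neg mult_mono mult_pos_pos) auto
  also have "(c * q) * (2 * c * q) = 2 * c^2 * q^2" by (simp add: power2_eq_square)
  finally show ?thesis unfolding p'_def .
qed

lemma telescoping_sum_square:
  fixes P e :: "nat \<Rightarrow> real"
  assumes step: "\<And>t. P (Suc t) = P t - g * e t" and g: "g \<noteq> 0"
  shows "(\<Sum>t<n. P t * e t) = (P 0 ^ 2 - P n ^ 2) / (2 * g) + g / 2 * (\<Sum>t<n. e t ^ 2)"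
proof (induction n)
  case (Suc n)
  then show ?case unfolding step using g by (simp add: field_simps power2_eq_square)
qed simp

text \<open>Non-integrable functions have Bochner integral 0, hence the side condition \<open>0 \<le> c\<close>.\<close>

lemma integral_le_by_majorant:
  fixes f g :: "'a \<Rightarrow> real"
  assumes g: "integrable M g" and le: "AE x in M. f x \<le> g x"
    and c: "(\<integral>x. g x \<partial>M) \<le> c" "0 \<le> c"
  shows "(\<integral>x. f x \<partial>M) \<le> c"
proof (cases "integrable M f")
  case True
  then show ?thesis using integral_mono_AE[OF True g le] c by linarith
qed (use c in \<open>simp add: not_integrable_integral_eq\<close>)

lemma (in prob_space) integral_abs_le_const:
  fixes f :: "'a \<Rightarrow> real"
  assumes f: "f \<in> borel_measurable M" and bounded: "AE x in M. \<bar>f x\<bar> \<le> B"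
  shows "integrable M f" and "\<bar>\<integral>x. f x \<partial>M\<bar> \<le> B"
proof -
  show int: "integrable M f" using integrable_const_bound[of f B] f bounded by simp
  have "(\<integral>x. f x \<partial>M) \<le> B" "- B \<le> (\<integral>x. f x \<partial>M)"
    using bounded by (intro integral_le_const integral_ge_const int; auto)+
  then show "\<bar>\<integral>x. f x \<partial>M\<bar> \<le> B" by linarith
qed

lemma integral_PiM_component:
  fixes f :: "'a \<Rightarrow> real"
  assumes D: "prob_space D" and t: "t \<in> I" and f: "f \<in> borel_measurable D"
  shows "(\<integral>\<omega>. f (\<omega> t) \<partial>PiM I (\<lambda>_. D)) = (\<integral>z. f z \<partial>D)"
    and "integrable D f \<Longrightarrow> integrable (PiM I (\<lambda>_. D)) (\<lambda>\<omega>. f (\<omega> t))"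
proof -
  have T: "(\<lambda>\<omega>. \<omega> t) \<in> PiM I (\<lambda>_. D) \<rightarrow>\<^sub>M D" using t by (rule measurable_component_singleton)
  have distr: "distr (PiM I (\<lambda>_. D)) D (\<lambda>\<omega>. \<omega> t) = D"
    using D t by (intro distr_PiM_component)
  show "(\<integral>\<omega>. f (\<omega> t) \<partial>PiM I (\<lambda>_. D)) = (\<integral>z. f z \<partial>D)"
    using integral_distr[OF T f] unfolding distr ..
  show "integrable D f \<Longrightarrow> integrable (PiM I (\<lambda>_. D)) (\<lambda>\<omega>. f (\<omega> t))"
    using integrable_distr_eq[OF T f] unfolding distr by simp
qed

lemma AE_PiM_all_components:
  assumes "prob_space D" "finite J" "AE z in D. z \<in> S"
  shows "AE \<omega> in PiM J (\<lambda>_. D). \<forall>s\<in>J. \<omega> s \<in> S"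
  using assms by (intro AE_finite_allI AE_PiM_component) auto

lemma integral_PiM_fresh_component:
  fixes f :: "'b \<Rightarrow> 'a \<Rightarrow> real" and D :: "'a measure"
  assumes D: "prob_space D" and I: "finite I" "t \<in> I"
    and fresh: "\<And>\<omega> y. \<phi> (fun_upd \<omega> t y) = \<phi> \<omega>"
    and int: "integrable (PiM I (\<lambda>_. D)) (\<lambda>\<omega>. f (\<phi> \<omega>) (\<omega> t))"
  shows "(\<integral>\<omega>. f (\<phi> \<omega>) (\<omega> t) \<partial>PiM I (\<lambda>_. D))
    = (\<integral>x. (\<integral>z. f (\<phi> x) z \<partial>D) \<partial>PiM (I - {t}) (\<lambda>_. D))"
proof -
  interpret D: prob_space D by (rule D)
  interpret product_sigma_finite "\<lambda>_. D"
    by (simp add: product_sigma_finite_def D.sigma_finite_measure_axioms)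
  have "(\<integral>\<omega>. f (\<phi> \<omega>) (\<omega> t) \<partial>PiM I (\<lambda>_. D))
      = (\<integral>\<omega>. f (\<phi> \<omega>) (\<omega> t) \<partial>PiM (insert t (I - {t})) (\<lambda>_. D))"
    by (simp only: insert_Diff[OF I(2)])
  also have "\<dots> = (\<integral>x. (\<integral>y. f (\<phi> (x(t := y))) ((x(t := y)) t) \<partial>D) \<partial>PiM (I - {t}) (\<lambda>_. D))"
    using int I by (intro product_integral_insert) (simp_all only: insert_Diff finite_Diff, simp)
  also have "\<dots> = (\<integral>x. (\<integral>z. f (\<phi> x) z \<partial>D) \<partial>PiM (I - {t}) (\<lambda>_. D))" by (simp add: fresh)
  finally show ?thesis .
qed

lemma integral_PiM_fresh_component_ge:
  fixes f :: "'b \<Rightarrow> 'a \<Rightarrow> real" and D :: "'a measure"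
  assumes D: "prob_space D" and I: "finite I" "t \<in> I"
    and fresh: "\<And>\<omega> y. \<phi> (fun_upd \<omega> t y) = \<phi> \<omega>"
    and \<phi>: "\<phi> \<in> PiM I (\<lambda>_. D) \<rightarrow>\<^sub>M N" "\<phi> \<in> PiM (I - {t}) (\<lambda>_. D) \<rightarrow>\<^sub>M N"
    and f: "(\<lambda>(p, z). f p z) \<in> borel_measurable (N \<Otimes>\<^sub>M D)"
    and S: "AE z in D. z \<in> S"
    and \<phi>_P: "\<And>\<omega>. \<forall>s\<in>I - {t}. \<omega> s \<in> S \<Longrightarrow> \<phi> \<omega> \<in> P"
    and bounded: "\<And>p z. p \<in> P \<Longrightarrow> z \<in> S \<Longrightarrow> \<bar>f p z\<bar> \<le> B"
    and lower: "\<And>p. p \<in> P \<Longrightarrow> c \<le> (\<integral>z. f p z \<partial>D)"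
  shows "integrable (PiM I (\<lambda>_. D)) (\<lambda>\<omega>. f (\<phi> \<omega>) (\<omega> t))"
    and "c \<le> (\<integral>\<omega>. f (\<phi> \<omega>) (\<omega> t) \<partial>PiM I (\<lambda>_. D))"
proof -
  interpret D: prob_space D by (rule D)
  let ?J = "I - {t}"
  interpret PI: prob_space "PiM I (\<lambda>_. D)" using D by (intro prob_space_PiM)
  interpret PJ: prob_space "PiM ?J (\<lambda>_. D)" using D by (intro prob_space_PiM)
  have AE_S: "AE \<omega> in PiM J (\<lambda>_. D). \<forall>s\<in>J. \<omega> s \<in> S" if "J \<subseteq> I" for J
    using AE_PiM_all_components[OF D finite_subset[OF that I(1)] S] .
  have f_D: "(\<lambda>z. f p z) \<in> borel_measurable D" if "p \<in> space N" for p
    using measurable_Pair2[OF f that] by simp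
  have "(\<lambda>\<omega>. f (\<phi> \<omega>) (\<omega> t)) \<in> borel_measurable (PiM I (\<lambda>_. D))"
    using measurable_compose[OF measurable_Pair[OF \<phi>(1) measurable_component_singleton[OF I(2)]] f]
    by simp
  moreover have "AE \<omega> in PiM I (\<lambda>_. D). \<bar>f (\<phi> \<omega>) (\<omega> t)\<bar> \<le> B"
    using AE_S[OF order_refl] by eventually_elim (use I \<phi>_P bounded in auto)
  ultimately show int: "integrable (PiM I (\<lambda>_. D)) (\<lambda>\<omega>. f (\<phi> \<omega>) (\<omega> t))"
    by (rule PI.integral_abs_le_const(1))
  have "(\<integral>\<omega>. f (\<phi> \<omega>) (\<omega> t) \<partial>PiM I (\<lambda>_. D))
      = (\<integral>x. (\<integral>z. f (\<phi> x) z \<partial>D) \<partial>PiM ?J (\<lambda>_. D))"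
    by (rule integral_PiM_fresh_component[OF D I fresh int])
  also have "c \<le> \<dots>"
  proof (rule PJ.integral_ge_const)
    have "(\<lambda>x. \<integral>z. f (\<phi> x) z \<partial>D) \<in> borel_measurable (PiM ?J (\<lambda>_. D))"
      using measurable_compose[OF measurable_Pair[OF measurable_compose[OF measurable_fst \<phi>(2)]
          measurable_snd] f]
      by (intro D.borel_measurable_lebesgue_integral) (simp add: case_prod_beta)
    moreover have "AE x in PiM ?J (\<lambda>_. D). \<bar>\<integral>z. f (\<phi> x) z \<partial>D\<bar> \<le> B"
      using AE_S[OF Diff_subset] AE_space
    proof eventually_elim
      case (elim x)
      then have "\<phi> x \<in> P" "\<phi> x \<in> space N" using \<phi>_P measurable_space[OF \<phi>(2)] by auto
      have "AE z in D. \<bar>f (\<phi> x) z\<bar> \<le> B"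
        using S by eventually_elim (rule bounded[OF \<open>\<phi> x \<in> P\<close>])
      then show ?case by (rule D.integral_abs_le_const(2)[OF f_D[OF \<open>\<phi> x \<in> space N\<close>]])
    qed
    ultimately show "integrable (PiM ?J (\<lambda>_. D)) (\<lambda>x. \<integral>z. f (\<phi> x) z \<partial>D)"
      by (rule PJ.integral_abs_le_const(1))
    show "AE x in PiM ?J (\<lambda>_. D). c \<le> (\<integral>z. f (\<phi> x) z \<partial>D)"
      using AE_S[OF Diff_subset] by eventually_elim (auto intro: lower \<phi>_P)
  qed
  finally show "c \<le> (\<integral>\<omega>. f (\<phi> \<omega>) (\<omega> t) \<partial>PiM I (\<lambda>_. D))" .
qed

section \<open>Bounded prices\<close>

lemma rp_price_eq_sum:
  "rp_price sel p1 d g \<omega> n $ j = p1 $ j - g * (\<Sum>t<n. d $ j - rp_alloc sel p1 d g \<omega> t $ j)"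
  by (induction n) (simp_all add: rp_alloc_def algebra_simps)

lemma rp_price_cong:
  "(\<And>s. s < t \<Longrightarrow> \<omega> s = \<omega>' s) \<Longrightarrow> rp_price sel p1 d g \<omega> t = rp_price sel p1 d g \<omega>' t"
  by (induction t) auto

locale rp_market =
  fixes d p1 :: "real^'m" and wl wu a A :: real
    and sel :: "real^'m \<Rightarrow> real \<Rightarrow> real^'m \<Rightarrow> real^'m"
  assumes d_pos: "\<forall>j. 0 < d $ j" and p1_pos: "\<forall>j. 0 < p1 $ j"
    and wl_pos: "0 < wl" and wl_le_wu: "wl \<le> wu" and a_pos: "0 < a" and a_le_A: "a \<le> A"
    and sel_optimal:
      "\<And>p w u. (\<exists>x. optimal_consumption p w u x) \<Longrightarrow> optimal_consumption p w u (sel p w u)"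
begin

definition user_box :: "(real \<times> (real^'m)) set" where
  "user_box = {z. wl \<le> fst z \<and> fst z \<le> wu \<and> (\<forall>j. a \<le> snd z $ j \<and> snd z $ j \<le> A)}"

definition d_max :: real where "d_max = Max (range (\<lambda>j. d $ j))"
definition d_min :: real where "d_min = Min (range (\<lambda>j. d $ j))"
definition d_sum :: real where "d_sum = (\<Sum>j\<in>UNIV. d $ j)"
definition \<kappa> :: real where "\<kappa> = real CARD('m) * A / a"

text \<open>The invariant \<open>price_region\<close> bounds prices above by \<open>U\<close> and, through \<open>\<Sum>j. 1 / p $ j \<le> K\<close>,
  below by \<open>1 / K\<close>. Below the price \<open>q_crit\<close> some good is overbought by \<open>4 \<kappa>\<^sup>2 d_sum\<close>
  (lemma \<open>overdemanded_good\<close>), which is what makes \<open>\<Sum>j. 1 / p $ j\<close> decrease from \<open>K0\<close> on.\<close>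

definition q_crit :: real where "q_crit = wl / (\<kappa> * (d_max + 4 * \<kappa>^2 * d_sum))"
definition K0 :: real where "K0 = max (real CARD('m) / q_crit) (\<Sum>j\<in>UNIV. 1 / p1 $ j)"
definition K :: real where "K = K0 + 1"
definition U :: real where "U = max (Max (range (\<lambda>j. p1 $ j))) (wu / d_min + 1)"
definition step_max :: real where
  "step_max = min (1 / (2 * K * d_max)) (min (1 / (K^2 * wu)) (1 / (2 * d_sum * K^2)))"

definition price_region :: "real^'m \<Rightarrow> bool" where
  "price_region p \<longleftrightarrow> (\<forall>j. 0 < p $ j \<and> p $ j \<le> U) \<and> (\<Sum>j\<in>UNIV. 1 / p $ j) \<le> K"

lemma d_min_le: "d_min \<le> d $ j" and d_max_ge: "d $ j \<le> d_max"
  unfolding d_min_def d_max_def by (auto intro: Min_le Max_ge)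

lemma constant_bounds:
  shows wu_pos: "0 < wu" and d_min_pos: "0 < d_min"
    and d_sum_pos: "0 < d_sum" and \<kappa>_ge_1: "1 \<le> \<kappa>" and q_crit_pos: "0 < q_crit"
    and d_max_pos: "0 < d_max" and K_gt_1: "1 < K" and U_pos: "0 < U" and step_max_pos: "0 < step_max"
proof -
  show wu: "0 < wu" using wl_pos wl_le_wu by simp
  have "d_min \<in> range (\<lambda>j. d $ j)" unfolding d_min_def by (rule Min_in) auto
  then show d_min: "0 < d_min" using d_pos by auto
  show d_max: "0 < d_max" using d_min d_min_le[of undefined] d_max_ge[of undefined] by simp
  show d_sum: "0 < d_sum" unfolding d_sum_def using d_pos by (intro sum_pos) auto
  have "1 * 1 \<le> real CARD('m) * (A / a)" using a_pos a_le_A by (intro mult_mono) auto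
  then show \<kappa>: "1 \<le> \<kappa>" unfolding \<kappa>_def by simp
  show q_crit: "0 < q_crit" unfolding q_crit_def using wl_pos \<kappa> d_max d_sum
    by (intro divide_pos_pos mult_pos_pos add_pos_nonneg) auto
  have "0 < real CARD('m) / q_crit" using q_crit by simp
  then have "0 < K0" unfolding K0_def by (meson max.cobounded1 less_le_trans)
  then show K: "1 < K" unfolding K_def by simp
  have "0 < wu / d_min + 1" using wu d_min by (simp add: add_pos_pos)
  then show "0 < U" unfolding U_def by (meson max.cobounded2 less_le_trans)
  show "0 < step_max" unfolding step_max_def using K d_max d_sum wu by simp
qed

lemma price_region_pos: "price_region p \<Longrightarrow> 0 < p $ j"
  and price_region_le: "price_region p \<Longrightarrow> p $ j \<le> U"
  unfolding price_region_def by auto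

lemma price_region_ge:
  assumes "price_region p" shows "1 / K \<le> p $ j"
proof -
  have "1 / p $ j \<le> (\<Sum>i\<in>UNIV. 1 / p $ i)"
    using assms by (intro member_le_sum) (auto simp: price_region_def less_imp_le)
  also have "\<dots> \<le> K" using assms unfolding price_region_def by simp
  finally show ?thesis using price_region_pos[OF assms] K_gt_1 by (simp add: field_simps)
qed

lemma price_region_p1: "price_region p1"
  unfolding price_region_def K_def K0_def U_def using p1_pos by (auto intro: max.coboundedI1 Max_ge)

lemma user_box_pos: "z \<in> user_box \<Longrightarrow> 0 < fst z \<and> 0 < snd z $ j"
  unfolding user_box_def using wl_pos a_pos by (auto intro: less_le_trans)

lemma sel_optimal_on_region:
  assumes "price_region p" "z \<in> user_box"
  shows "optimal_consumption p (fst z) (snd z) (sel p (fst z) (snd z))"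
  using assms user_box_pos[OF assms(2)]
  by (intro sel_optimal optimal_consumption_exists) (auto simp: price_region_pos less_imp_le)

lemma region_consumption_le:
  assumes p: "price_region p" and z: "z \<in> user_box"
    and oc: "optimal_consumption p (fst z) (snd z) x"
  shows "x $ j \<le> wu * K"
proof -
  have "x $ j \<le> fst z / p $ j"
    using oc p by (intro optimal_consumption_component_le) (auto simp: price_region_pos less_imp_le)
  also have "\<dots> \<le> wu / (1 / K)"
    using z p price_region_ge[OF p] K_gt_1 user_box_pos[OF z] wu_pos
    by (intro frac_le) (auto simp: user_box_def)
  finally show ?thesis by simp
qed

lemma step_demand_le:
  assumes g: "0 < g" "g \<le> step_max"
  shows "g * d $ j \<le> 1 / (2 * K)"
proof -
  have "g * d $ j \<le> 1 / (2 * K * d_max) * d_max"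
    using g d_max_ge[of j] d_pos d_max_pos K_gt_1 unfolding step_max_def
    by (intro mult_mono) (auto simp: less_imp_le)
  then show ?thesis using d_max_pos by simp
qed

lemma step_consumption_le:
  assumes p: "price_region p" and g: "0 < g" "g \<le> step_max" and z: "z \<in> user_box"
    and oc: "optimal_consumption p (fst z) (snd z) x"
  shows "g * x $ j \<le> 1 / K"
proof -
  have "g * x $ j \<le> 1 / (K^2 * wu) * (wu * K)"
    using g region_consumption_le[OF p z oc, of j] optimal_consumption_nonneg[OF oc, of j]
      wu_pos K_gt_1 unfolding step_max_def by (intro mult_mono) auto
  also have "\<dots> = 1 / K" using wu_pos K_gt_1 by (simp add: power2_eq_square)
  finally show ?thesis .
qed

lemma price_step_bounds:
  assumes p: "price_region p" and g: "0 < g" "g \<le> step_max" and z: "z \<in> user_box"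
    and oc: "optimal_consumption p (fst z) (snd z) x"
  shows "0 < (p - g *\<^sub>R (d - x)) $ j \<and> (p - g *\<^sub>R (d - x)) $ j \<le> U"
proof -
  have step: "(p - g *\<^sub>R (d - x)) $ j = p $ j + g * (x $ j - d $ j)" by (simp add: algebra_simps)
  have "0 \<le> g * x $ j" using g optimal_consumption_nonneg[OF oc] by simp
  then have "1 / K - 1 / (2 * K) \<le> p $ j + g * (x $ j - d $ j)"
    using price_region_ge[OF p, of j] step_demand_le[OF g, of j] by (simp add: right_diff_distrib)
  moreover have "0 < 1 / K - 1 / (2 * K)" using K_gt_1 by (simp add: field_simps)
  moreover have "p $ j + g * (x $ j - d $ j) \<le> U"
  proof (cases "wu / d_min \<le> p $ j")
    case True
    have "x $ j \<le> fst z / p $ j"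
      using oc p by (intro optimal_consumption_component_le) (auto simp: price_region_pos less_imp_le)
    also have "\<dots> \<le> wu / (wu / d_min)"
      using True z user_box_pos[OF z] wu_pos d_min_pos by (intro frac_le) (auto simp: user_box_def)
    also have "\<dots> \<le> d $ j" using wu_pos d_min_le[of j] by simp
    finally have "g * (x $ j - d $ j) \<le> 0" using g by (simp add: mult_nonneg_nonpos)
    then show ?thesis using price_region_le[OF p, of j] by simp
  next
    case False
    have "p $ j + g * (x $ j - d $ j) \<le> p $ j + g * x $ j"
      using g d_pos by (simp add: right_diff_distrib less_imp_le)
    also have "\<dots> \<le> wu / d_min + 1"
      using False step_consumption_le[OF p g z oc, of j] K_gt_1 by (smt (verit) divide_le_eq_1)
    also have "\<dots> \<le> U" unfolding U_def by simp
    finally show ?thesis .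
  qed
  ultimately show ?thesis unfolding step by linarith
qed

lemma reciprocal_increment_le:
  assumes p: "price_region p" and g: "0 < g" "g \<le> step_max" and x: "0 \<le> x $ j"
    and q: "0 < q" "q \<le> p $ j"
  shows "1 / (p - g *\<^sub>R (d - x)) $ j - 1 / p $ j \<le> 2 * g * d $ j / q^2"
proof -
  have "g * d $ j \<le> p $ j / 2"
    using step_demand_le[OF g, of j] price_region_ge[OF p, of j] by simp
  then have "1 / (p $ j + g * (x $ j - d $ j)) - 1 / p $ j \<le> 2 * g * d $ j / q^2"
    using q x g d_pos by (intro reciprocal_step_le) (auto simp: less_imp_le)
  then show ?thesis by (simp add: algebra_simps)
qed

lemma reciprocal_sum_step_small:
  assumes p: "price_region p" and g: "0 < g" "g \<le> step_max" and x: "\<forall>j. 0 \<le> x $ j"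
    and small: "(\<Sum>j\<in>UNIV. 1 / p $ j) \<le> K0"
  shows "(\<Sum>j\<in>UNIV. 1 / (p - g *\<^sub>R (d - x)) $ j) \<le> K"
proof -
  have "(\<Sum>j\<in>UNIV. 1 / (p - g *\<^sub>R (d - x)) $ j - 1 / p $ j) \<le> (\<Sum>j\<in>UNIV. 2 * g * d $ j / (1 / K)^2)"
    using p g x K_gt_1 price_region_ge[OF p]
    by (intro sum_mono reciprocal_increment_le) auto
  also have "\<dots> = 2 * g * d_sum * K^2"
    unfolding d_sum_def by (simp add: sum_distrib_left sum_distrib_right power_divide)
  also have "\<dots> \<le> 1"
    using g d_sum_pos K_gt_1 unfolding step_max_def by (simp add: field_simps)
  finally show ?thesis using small unfolding K_def sum_subtractf by linarith
qed

lemma overdemanded_good: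
  assumes p: "price_region p" and z: "z \<in> user_box"
    and oc: "optimal_consumption p (fst z) (snd z) x" and cheap: "p $ j < q_crit"
  shows "\<exists>k. p $ k \<le> \<kappa> * p $ j \<and> d $ k + 4 * \<kappa>^2 * d_sum \<le> x $ k"
proof -
  have pj: "0 < p $ j" by (rule price_region_pos[OF p])
  have "\<forall>i. 0 < p $ i" using price_region_pos[OF p] by blast
  moreover have "0 < fst z" using user_box_pos[OF z] by blast
  moreover have "\<forall>i. a \<le> snd z $ i \<and> snd z $ i \<le> A" using z unfolding user_box_def by blast
  ultimately obtain k where k: "fst z / (\<kappa> * p $ j) \<le> x $ k" "p $ k \<le> \<kappa> * p $ j"
    using optimal_consumption_heavy_good[OF _ _ a_pos _ oc] unfolding \<kappa>_def by blast
  have "wl / (\<kappa> * q_crit) = d_max + 4 * \<kappa>^2 * d_sum"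
    unfolding q_crit_def using wl_pos \<kappa>_ge_1 d_max_pos d_sum_pos by (simp add: field_simps)
  then have "d $ k + 4 * \<kappa>^2 * d_sum \<le> wl / (\<kappa> * q_crit)" using d_max_ge[of k] by simp
  also have "\<dots> \<le> fst z / (\<kappa> * p $ j)"
    using z pj cheap wl_pos \<kappa>_ge_1 unfolding user_box_def by (intro frac_le) auto
  finally show ?thesis using k by auto
qed

lemma cheap_price_lt_q_crit:
  fixes p :: "real^'m"
  assumes q: "0 < q" "\<forall>j. q \<le> p $ j" and large: "K0 < (\<Sum>j\<in>UNIV. 1 / p $ j)"
  shows "q < q_crit"
proof (rule ccontr)
  assume "\<not> q < q_crit"
  then have "real CARD('m) / q \<le> real CARD('m) / q_crit"
    using q q_crit_pos by (intro divide_left_mono) auto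
  moreover have "(\<Sum>j\<in>UNIV. 1 / p $ j) \<le> (\<Sum>j\<in>(UNIV::'m set). 1 / q)"
    using q by (intro sum_mono) (simp add: frac_le)
  ultimately show False using large unfolding K0_def by simp
qed

lemma reciprocal_sum_step_large:
  assumes p: "price_region p" and g: "0 < g" "g \<le> step_max" and z: "z \<in> user_box"
    and oc: "optimal_consumption p (fst z) (snd z) x" and large: "K0 < (\<Sum>j\<in>UNIV. 1 / p $ j)"
  shows "(\<Sum>j\<in>UNIV. 1 / (p - g *\<^sub>R (d - x)) $ j) \<le> (\<Sum>j\<in>UNIV. 1 / p $ j)"
proof -
  define q where "q = Min (range (\<lambda>j. p $ j))"
  have "q \<in> range (\<lambda>j. p $ j)" unfolding q_def by (rule Min_in) auto
  then obtain j0 where j0: "p $ j0 = q" by auto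
  have q_le: "q \<le> p $ j" for j unfolding q_def by (rule Min_le) auto
  have q: "0 < q" using price_region_pos[OF p, of j0] j0 by simp
  obtain k where k: "p $ k \<le> \<kappa> * q" and over: "d $ k + 4 * \<kappa>^2 * d_sum \<le> x $ k"
    using overdemanded_good[OF p z oc, of j0] j0 cheap_price_lt_q_crit[OF q _ large] q_le by auto
  have "0 \<le> 4 * \<kappa>^2 * d_sum" using d_sum_pos by simp
  with over have "d $ k \<le> x $ k" by linarith
  have step_k: "(p - g *\<^sub>R (d - x)) $ k = p $ k + g * (x $ k - d $ k)" by (simp add: algebra_simps)
  have "0 \<le> g * d $ k" using g d_pos by (simp add: less_imp_le)
  then have "p $ k + g * (x $ k - d $ k) \<le> \<kappa> * q + q"
    using k step_consumption_le[OF p g z oc, of k] price_region_ge[OF p, of j0] j0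
    by (simp add: right_diff_distrib)
  also have "\<dots> \<le> 2 * \<kappa> * q" using \<kappa>_ge_1 q by simp
  finally have "1 / (p - g *\<^sub>R (d - x)) $ k - 1 / p $ k \<le> - (g * (x $ k - d $ k)) / (2 * \<kappa>^2 * q^2)"
    unfolding step_k using q price_region_pos[OF p] k \<open>d $ k \<le> x $ k\<close> g
    by (intro reciprocal_step_decrease) auto
  also have "\<dots> \<le> - (g * (4 * \<kappa>^2 * d_sum)) / (2 * \<kappa>^2 * q^2)"
    using over g q \<kappa>_ge_1 by (intro divide_right_mono) auto
  also have "\<dots> = - (2 * g * d_sum / q^2)" using \<kappa>_ge_1 by (simp add: field_simps power2_eq_square)
  \<comment> \<open>this drop of \<open>1 / p $ k\<close> outweighs the rise of all other reciprocals\<close>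
  finally have decrease: "1 / (p - g *\<^sub>R (d - x)) $ k - 1 / p $ k \<le> - (2 * g * d_sum / q^2)" .
  have "(\<Sum>j\<in>UNIV - {k}. 1 / (p - g *\<^sub>R (d - x)) $ j - 1 / p $ j)
      \<le> (\<Sum>j\<in>UNIV - {k}. 2 * g * d $ j / q^2)"
    using p g q q_le optimal_consumption_nonneg[OF oc] by (intro sum_mono reciprocal_increment_le) auto
  also have "\<dots> \<le> (\<Sum>j\<in>UNIV. 2 * g * d $ j / q^2)"
    by (rule sum_mono2) (use g d_pos in \<open>auto simp: less_imp_le\<close>)
  also have "\<dots> = 2 * g * d_sum / q^2"
    unfolding d_sum_def by (simp add: sum_distrib_left sum_divide_distrib)
  finally have "(\<Sum>j\<in>UNIV. 1 / (p - g *\<^sub>R (d - x)) $ j - 1 / p $ j) \<le> 0"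
    using decrease by (simp add: sum.remove[of UNIV k])
  then show ?thesis unfolding sum_subtractf by simp
qed

lemma price_region_step:
  assumes p: "price_region p" and g: "0 < g" "g \<le> step_max" and z: "z \<in> user_box"
    and oc: "optimal_consumption p (fst z) (snd z) x"
  shows "price_region (p - g *\<^sub>R (d - x))"
proof -
  have "(\<Sum>j\<in>UNIV. 1 / (p - g *\<^sub>R (d - x)) $ j) \<le> K"
  proof (cases "(\<Sum>j\<in>UNIV. 1 / p $ j) \<le> K0")
    case True
    then show ?thesis
      using reciprocal_sum_step_small[OF p g] optimal_consumption_nonneg[OF oc] by blast
  next
    case False
    then show ?thesis
      using reciprocal_sum_step_large[OF p g z oc] p unfolding price_region_def by simp
  qed
  then show ?thesis using price_step_bounds[OF p g z oc] unfolding price_region_def by blast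
qed

lemma price_region_rp_price:
  assumes g: "0 < g" "g \<le> step_max" and users: "\<forall>s<t. \<omega> s \<in> user_box"
  shows "price_region (rp_price sel p1 d g \<omega> t)"
  using users
proof (induction t)
  case (Suc t)
  then have p: "price_region (rp_price sel p1 d g \<omega> t)" and z: "\<omega> t \<in> user_box" by simp_all
  show ?case using price_region_step[OF p g z sel_optimal_on_region[OF p z]] by simp
qed (simp add: price_region_p1)

lemma rp_alloc_optimal:
  assumes g: "0 < g" "g \<le> step_max" and users: "\<forall>s\<le>t. \<omega> s \<in> user_box"
  shows "optimal_consumption (rp_price sel p1 d g \<omega> t) (fst (\<omega> t)) (snd (\<omega> t)) (rp_alloc sel p1 d g \<omega> t)"
  unfolding rp_alloc_def using users
  by (intro sel_optimal_on_region price_region_rp_price[OF g]) auto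

end

section \<open>Duality and pathwise regret\<close>

text \<open>The Eisenberg-Gale dual function of one user \<open>z = (w, u)\<close> at prices \<open>p\<close>: the
  Lagrangian \<open>w ln (u \<bullet> x) - p \<bullet> x + p \<bullet> d\<close> maximised over \<open>x\<close>, which is attained at the
  demand \<open>x = sel p w u\<close> with \<open>p \<bullet> x = w\<close>.\<close>

definition dual_value ::
  "(real^'m \<Rightarrow> real \<Rightarrow> real^'m \<Rightarrow> real^'m) \<Rightarrow> real^'m \<Rightarrow> real^'m \<Rightarrow> real \<times> (real^'m) \<Rightarrow> real"
  where "dual_value sel d p z = fst z * ln (snd z \<bullet> sel p (fst z) (snd z)) + p \<bullet> d - fst z"

lemma online_util_eq_dual_value:
  "online_util (rp_alloc sel p1 d g \<omega>) n \<omega> =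
     (\<Sum>t<n. dual_value sel d (rp_price sel p1 d g \<omega> t) (\<omega> t))
     - (\<Sum>t<n. rp_price sel p1 d g \<omega> t \<bullet> d - fst (\<omega> t))"
  unfolding online_util_def dual_value_def rp_alloc_def by (simp add: sum_subtractf[symmetric])

context rp_market
begin

lemma price_region_inner_d:
  assumes "price_region p" shows "0 \<le> p \<bullet> d" and "p \<bullet> d \<le> U * d_sum"
proof -
  show "0 \<le> p \<bullet> d"
    unfolding inner_vec_def using assms d_pos by (intro sum_nonneg) (simp add: price_region_pos less_imp_le)
  have "p \<bullet> d \<le> (\<Sum>j\<in>UNIV. U * d $ j)"
    unfolding inner_vec_def using assms d_pos
    by (intro sum_mono mult_right_mono) (auto simp: price_region_le less_imp_le)
  then show "p \<bullet> d \<le> U * d_sum" unfolding d_sum_def by (simp add: sum_distrib_left)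
qed

lemma region_utility_bounds:
  assumes p: "price_region p" and z: "z \<in> user_box"
    and oc: "optimal_consumption p (fst z) (snd z) x"
  shows "wl * a / U \<le> snd z \<bullet> x" and "snd z \<bullet> x \<le> real CARD('m) * A * wu * K"
proof -
  have w: "0 < fst z" and u: "0 < snd z $ j" for j using user_box_pos[OF z] by auto
  have lower: "wl * a / U \<le> fst z * snd z $ j / p $ j" for j
    using z wl_pos a_pos w u[of j] price_region_pos[OF p] price_region_le[OF p] unfolding user_box_def
    by (intro frac_le mult_mono) auto
  have upper: "fst z * snd z $ j / p $ j \<le> snd z \<bullet> x" for j
    using w by (intro optimal_consumption_utility_ge[OF price_region_pos[OF p] _ oc]) simp
  show "wl * a / U \<le> snd z \<bullet> x" using lower[of undefined] upper[of undefined] by (rule order_trans)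
  have "snd z \<bullet> x \<le> (\<Sum>j\<in>(UNIV::'m set). A * (wu * K))"
    unfolding inner_vec_def inner_real_def using z region_consumption_le[OF p z oc]
      optimal_consumption_nonneg[OF oc] a_pos unfolding user_box_def
    by (intro sum_mono mult_mono) (auto intro: order_trans[OF less_imp_le])
  then show "snd z \<bullet> x \<le> real CARD('m) * A * wu * K" by simp
qed

definition dual_bound :: real where
  "dual_bound = wu * (\<bar>ln (wl * a / U)\<bar> + \<bar>ln (real CARD('m) * A * wu * K)\<bar>) + U * d_sum + wu"

lemma dual_value_bound:
  assumes p: "price_region p" and z: "z \<in> user_box"
  shows "\<bar>dual_value sel d p z\<bar> \<le> dual_bound"
proof -
  define v where "v = snd z \<bullet> sel p (fst z) (snd z)"
  note bounds = region_utility_bounds[OF p z sel_optimal_on_region[OF p z], folded v_def]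
  have "0 < wl * a / U" using wl_pos a_pos U_pos by simp
  then have "ln (wl * a / U) \<le> ln v" "ln v \<le> ln (real CARD('m) * A * wu * K)"
    using bounds by simp_all
  then have "\<bar>ln v\<bar> \<le> \<bar>ln (wl * a / U)\<bar> + \<bar>ln (real CARD('m) * A * wu * K)\<bar>" by linarith
  moreover have "\<bar>fst z\<bar> \<le> wu" using z user_box_pos[OF z, THEN conjunct1] unfolding user_box_def by auto
  ultimately have "\<bar>fst z * ln v\<bar> \<le> wu * (\<bar>ln (wl * a / U)\<bar> + \<bar>ln (real CARD('m) * A * wu * K)\<bar>)"
    unfolding abs_mult using wu_pos by (intro mult_mono) auto
  moreover have "dual_value sel d p z = fst z * ln v + p \<bullet> d - fst z"
    unfolding dual_value_def v_def ..
  ultimately show ?thesis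
    using price_region_inner_d[OF p] z user_box_pos[OF z, THEN conjunct1] unfolding dual_bound_def user_box_def
    by (simp add: abs_le_iff)
qed

lemma feasible_utility_le_dual:
  assumes ps: "price_region ps" and users: "\<forall>t<n. \<omega> t \<in> user_box"
    and x: "\<forall>t<n. \<forall>j. 0 \<le> x t $ j" and cap: "\<forall>j. (\<Sum>t<n. x t $ j) \<le> real n * d $ j"
    and pos: "\<forall>t<n. 0 < snd (\<omega> t) \<bullet> x t"
  shows "(\<Sum>t<n. fst (\<omega> t) * ln (snd (\<omega> t) \<bullet> x t)) \<le> (\<Sum>t<n. dual_value sel d ps (\<omega> t))"
proof -
  have "(\<Sum>t<n. fst (\<omega> t) * ln (snd (\<omega> t) \<bullet> x t))
      \<le> (\<Sum>t<n. dual_value sel d ps (\<omega> t) + (ps \<bullet> x t - ps \<bullet> d))"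
  proof (rule sum_mono)
    fix t assume "t \<in> {..<n}"
    then have z: "\<omega> t \<in> user_box" and "\<forall>j. 0 \<le> x t $ j" "0 < snd (\<omega> t) \<bullet> x t"
      using users x pos by auto
    then have "fst (\<omega> t) * ln (snd (\<omega> t) \<bullet> x t)
        \<le> fst (\<omega> t) * ln (snd (\<omega> t) \<bullet> sel ps (fst (\<omega> t)) (snd (\<omega> t))) + ps \<bullet> x t - fst (\<omega> t)"
      using price_region_pos[OF ps] user_box_pos[OF z, THEN conjunct1]
      by (intro optimal_consumption_ln_le[OF _ _ sel_optimal_on_region[OF ps z]]) auto
    then show "fst (\<omega> t) * ln (snd (\<omega> t) \<bullet> x t) \<le> dual_value sel d ps (\<omega> t) + (ps \<bullet> x t - ps \<bullet> d)"
      unfolding dual_value_def by simp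
  qed
  also have "\<dots> = (\<Sum>t<n. dual_value sel d ps (\<omega> t)) + ((\<Sum>t<n. ps \<bullet> x t) - real n * (ps \<bullet> d))"
    by (simp add: sum.distrib sum_subtractf)
  also have "(\<Sum>t<n. ps \<bullet> x t) \<le> real n * (ps \<bullet> d)"
  proof -
    have "(\<Sum>t<n. ps \<bullet> x t) = (\<Sum>j\<in>UNIV. ps $ j * (\<Sum>t<n. x t $ j))"
      unfolding inner_vec_def inner_real_def sum_distrib_left by (rule sum.swap)
    also have "\<dots> \<le> (\<Sum>j\<in>UNIV. ps $ j * (real n * d $ j))"
      using cap price_region_pos[OF ps] by (intro sum_mono mult_left_mono) (auto simp: less_imp_le)
    also have "\<dots> = real n * (ps \<bullet> d)"
      by (simp add: inner_vec_def sum_distrib_left algebra_simps)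
    finally show ?thesis .
  qed
  finally show ?thesis by simp
qed

lemma offline_opt_le_dual:
  assumes ps: "price_region ps" and users: "\<forall>t<n. \<omega> t \<in> user_box"
  shows "offline_opt d n \<omega> \<le> (\<Sum>t<n. dual_value sel d ps (\<omega> t))"
proof -
  define F where "F = {(\<Sum>t<n. fst (\<omega> t) * ln (snd (\<omega> t) \<bullet> x t)) | x.
       (\<forall>t<n. \<forall>j. 0 \<le> x t $ j) \<and> (\<forall>j. (\<Sum>t<n. x t $ j) \<le> real n * d $ j) \<and>
       (\<forall>t<n. 0 < snd (\<omega> t) \<bullet> x t)}"
  have "0 < snd (\<omega> t) \<bullet> d" if "t < n" for t
    unfolding inner_vec_def inner_real_def using user_box_pos users that d_pos
    by (intro sum_pos) auto
  then have "(\<Sum>t<n. fst (\<omega> t) * ln (snd (\<omega> t) \<bullet> d)) \<in> F"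
    unfolding F_def using d_pos by (intro CollectI exI[of _ "\<lambda>_. d"]) (simp add: less_imp_le)
  moreover have "v \<le> (\<Sum>t<n. dual_value sel d ps (\<omega> t))" if "v \<in> F" for v
    using that feasible_utility_le_dual[OF ps users] unfolding F_def by blast
  ultimately have "Sup F \<le> (\<Sum>t<n. dual_value sel d ps (\<omega> t))" by (intro cSup_least) auto
  then show ?thesis unfolding offline_opt_def F_def .
qed

lemma price_gap_component_le:
  assumes g: "0 < g" "g \<le> step_max" and users: "\<forall>s<n. \<omega> s \<in> user_box"
  shows "(\<Sum>t<n. rp_price sel p1 d g \<omega> t $ j * (d $ j - rp_alloc sel p1 d g \<omega> t $ j))
    \<le> U^2 / (2 * g) + g / 2 * (real n * (d_max + wu * K)^2)"
proof -
  let ?p = "\<lambda>t. rp_price sel p1 d g \<omega> t $ j" and ?e = "\<lambda>t. d $ j - rp_alloc sel p1 d g \<omega> t $ j"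
  have "(\<Sum>t<n. ?p t * ?e t) = (?p 0 ^ 2 - ?p n ^ 2) / (2 * g) + g / 2 * (\<Sum>t<n. ?e t ^ 2)"
    by (rule telescoping_sum_square) (use g in \<open>simp_all add: rp_alloc_def\<close>)
  also have "(?p 0 ^ 2 - ?p n ^ 2) / (2 * g) \<le> U^2 / (2 * g)"
  proof -
    have "?p 0 ^ 2 \<le> U ^ 2"
      using p1_pos price_region_le[OF price_region_p1, of j] by (simp add: power_mono less_imp_le)
    moreover have "0 \<le> ?p n ^ 2" by simp
    ultimately have "?p 0 ^ 2 - ?p n ^ 2 \<le> U ^ 2" by linarith
    then show ?thesis using g by (intro divide_right_mono) auto
  qed
  also have "(\<Sum>t<n. ?e t ^ 2) \<le> (\<Sum>t<n. (d_max + wu * K)^2)"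
  proof (rule sum_mono)
    fix t assume "t \<in> {..<n}"
    then have "optimal_consumption (rp_price sel p1 d g \<omega> t) (fst (\<omega> t)) (snd (\<omega> t)) (rp_alloc sel p1 d g \<omega> t)"
      and "price_region (rp_price sel p1 d g \<omega> t)" and "\<omega> t \<in> user_box"
      using users by (auto intro: rp_alloc_optimal[OF g] price_region_rp_price[OF g])
    then have "0 \<le> rp_alloc sel p1 d g \<omega> t $ j" "rp_alloc sel p1 d g \<omega> t $ j \<le> wu * K"
      by (auto intro: optimal_consumption_nonneg region_consumption_le)
    moreover have "0 < d $ j" "d $ j \<le> d_max" using d_pos d_max_ge[of j] by auto
    ultimately have "\<bar>?e t\<bar> \<le> d_max + wu * K" by linarith
    then have "\<bar>?e t\<bar> ^ 2 \<le> (d_max + wu * K)^2" by (intro power_mono) auto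
    then show "?e t ^ 2 \<le> (d_max + wu * K)^2" by simp
  qed
  finally show ?thesis using g by (simp add: mult_left_mono)
qed

definition regret_bound :: "real \<Rightarrow> nat \<Rightarrow> real" where
  "regret_bound g n = real CARD('m) * (U^2 / (2 * g) + g / 2 * (real n * (d_max + wu * K)^2))"

lemma price_gap_le:
  assumes g: "0 < g" "g \<le> step_max" and users: "\<forall>s<n. \<omega> s \<in> user_box"
  shows "(\<Sum>t<n. rp_price sel p1 d g \<omega> t \<bullet> d - fst (\<omega> t)) \<le> regret_bound g n"
proof -
  let ?p = "rp_price sel p1 d g \<omega>" and ?x = "rp_alloc sel p1 d g \<omega>"
  have "(\<Sum>t<n. ?p t \<bullet> d - fst (\<omega> t)) \<le> (\<Sum>t<n. ?p t \<bullet> d - ?p t \<bullet> ?x t)"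
  proof (rule sum_mono)
    fix t assume "t \<in> {..<n}"
    then have "?p t \<bullet> ?x t \<le> fst (\<omega> t)"
      using users by (intro optimal_consumption_budget[OF rp_alloc_optimal[OF g]]) auto
    then show "?p t \<bullet> d - fst (\<omega> t) \<le> ?p t \<bullet> d - ?p t \<bullet> ?x t" by simp
  qed
  also have "\<dots> = (\<Sum>j\<in>UNIV. \<Sum>t<n. ?p t $ j * (d $ j - ?x t $ j))"
    by (subst sum.swap) (simp add: inner_vec_def sum_subtractf[symmetric] algebra_simps)
  also have "\<dots> \<le> (\<Sum>j\<in>(UNIV::'m set). U^2 / (2 * g) + g / 2 * (real n * (d_max + wu * K)^2))"
    by (intro sum_mono price_gap_component_le[OF g users])
  also have "\<dots> = regret_bound g n" unfolding regret_bound_def by simp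
  finally show ?thesis .
qed

lemma violation_le:
  assumes g: "0 < g" "g \<le> step_max" and users: "\<forall>s<n. \<omega> s \<in> user_box"
  shows "norm (violation_vec d (rp_alloc sel p1 d g \<omega>) n) \<le> real CARD('m) * U / g"
proof -
  let ?p = "rp_price sel p1 d g \<omega> n" and ?x = "rp_alloc sel p1 d g \<omega>"
  have component: "\<bar>violation_vec d ?x n $ j\<bar> \<le> U / g" for j
  proof -
    have "(\<Sum>t<n. ?x t $ j) - real n * d $ j = (?p $ j - p1 $ j) / g"
      using g unfolding rp_price_eq_sum by (simp add: sum_subtractf field_simps)
    moreover have "\<bar>?p $ j - p1 $ j\<bar> \<le> U"
      using price_region_rp_price[OF g users] price_region_p1
        price_region_pos[of _ j] price_region_le[of _ j]
      by (intro abs_leI) (smt (verit))+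
    ultimately show ?thesis
      using g unfolding violation_vec_def by (simp add: divide_right_mono abs_divide)
  qed
  have "norm (violation_vec d ?x n) \<le> (\<Sum>j\<in>UNIV. \<bar>violation_vec d ?x n $ j\<bar>)"
    by (rule norm_le_l1_cart)
  also have "\<dots> \<le> (\<Sum>j\<in>(UNIV::'m set). U / g)" by (rule sum_mono) (rule component)
  finally show ?thesis by simp
qed

lemma regret_pathwise_le:
  assumes ps: "price_region ps" and g: "0 < g" "g \<le> step_max" and users: "\<forall>t<n. \<omega> t \<in> user_box"
  shows "offline_opt d n \<omega> - online_util (rp_alloc sel p1 d g \<omega>) n \<omega>
    \<le> (\<Sum>t<n. dual_value sel d ps (\<omega> t) - dual_value sel d (rp_price sel p1 d g \<omega> t) (\<omega> t))
       + regret_bound g n"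
  using offline_opt_le_dual[OF ps users] price_gap_le[OF g users]
  unfolding online_util_eq_dual_value sum_subtractf by linarith

end

section \<open>Expected regret and violation\<close>

lemma admissible_rule_measurable:
  assumes sel: "admissible_rule sel" and f: "f \<in> borel_measurable M"
    and h: "h \<in> borel_measurable M" and k: "k \<in> borel_measurable M"
  shows "(\<lambda>x. sel (f x) (h x) (k x)) \<in> borel_measurable M"
proof -
  have sel_m: "(\<lambda>z. sel (fst z) (fst (snd z)) (snd (snd z))) \<in> borel_measurable borel"
    using sel unfolding admissible_rule_def by blast
  have "(\<lambda>x. (f x, h x, k x)) \<in> borel_measurable M"
    using measurable_Pair[OF f measurable_Pair[OF h k]] unfolding borel_prod .
  from measurable_compose[OF this sel_m] show ?thesis by simp
qed

lemma rp_price_measurable: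
  fixes D :: "(real \<times> (real^'m)) measure"
  assumes sel: "admissible_rule sel" and D: "sets D = sets borel" and I: "{..<t} \<subseteq> I"
  shows "(\<lambda>\<omega>. rp_price sel p1 d g \<omega> t) \<in> borel_measurable (PiM I (\<lambda>_. D))"
  using I
proof (induction t)
  case (Suc t)
  have "{..<t} \<subseteq> I" using Suc.prems by auto
  then have IH: "(\<lambda>\<omega>. rp_price sel p1 d g \<omega> t) \<in> borel_measurable (PiM I (\<lambda>_. D))"
    by (rule Suc.IH)
  have "(\<lambda>\<omega>. \<omega> t) \<in> borel_measurable (PiM I (\<lambda>_. D))"
    using Suc.prems measurable_cong_sets[OF refl D] by (auto intro: measurable_component_singleton)
  then have "(\<lambda>\<omega>. fst (\<omega> t)) \<in> borel_measurable (PiM I (\<lambda>_. D))"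
    and "(\<lambda>\<omega>. snd (\<omega> t)) \<in> borel_measurable (PiM I (\<lambda>_. D))"
    by (rule measurable_compose, intro borel_measurable_continuous_onI continuous_intros)+
  then show ?case using admissible_rule_measurable[OF sel IH] IH by simp
qed simp

lemma dual_value_measurable:
  fixes D :: "(real \<times> (real^'m)) measure"
  assumes sel: "admissible_rule sel" and D: "sets D = sets borel"
  shows "(\<lambda>(p, z). dual_value sel d p z) \<in> borel_measurable (borel \<Otimes>\<^sub>M D)"
proof -
  have sets: "sets (borel \<Otimes>\<^sub>M D) = sets (borel :: ((real^'m) \<times> real \<times> (real^'m)) measure)"
    unfolding sets_pair_measure_cong[OF refl D] borel_prod ..
  have "(\<lambda>(p, z). dual_value sel d p z) \<in> borel_measurable borel"
  proof -
    have m: "(\<lambda>pz::(real^'m) \<times> real \<times> (real^'m). fst pz) \<in> borel_measurable borel"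
      "(\<lambda>pz::(real^'m) \<times> real \<times> (real^'m). fst (snd pz)) \<in> borel_measurable borel"
      "(\<lambda>pz::(real^'m) \<times> real \<times> (real^'m). snd (snd pz)) \<in> borel_measurable borel"
      by (intro borel_measurable_continuous_onI continuous_intros)+
    note admissible_rule_measurable[OF sel m]
    with m show ?thesis unfolding dual_value_def case_prod_beta by measurable
  qed
  then show ?thesis using measurable_cong_sets[OF sets refl] by blast
qed

locale rp_market_iid = rp_market d p1 wl wu a A sel
  for d p1 :: "real^'m" and wl wu a A :: real and sel +
  fixes D :: "(real \<times> (real^'m)) measure"
  assumes D_prob: "prob_space D" and D_sets: "sets D = sets borel"
    and sel_admissible: "admissible_rule sel"
    and support_AE: "AE z in D. wl \<le> fst z \<and> fst z \<le> wu \<and> (\<forall>j. a \<le> snd z $ j \<and> snd z $ j \<le> A)"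
begin

lemma users_AE: "AE z in D. z \<in> user_box"
  using support_AE unfolding user_box_def by simp

definition expected_dual :: "real^'m \<Rightarrow> real" where
  "expected_dual p = (\<integral>z. dual_value sel d p z \<partial>D)"

definition dual_inf :: real where
  "dual_inf = Inf (expected_dual ` Collect price_region)"

lemma dual_value_measurable_D: "(\<lambda>z. dual_value sel d p z) \<in> borel_measurable D"
  using measurable_Pair2[OF dual_value_measurable[OF sel_admissible D_sets], of p] by simp

lemma expected_dual_bound:
  assumes "price_region p"
  shows "integrable D (\<lambda>z. dual_value sel d p z)" and "\<bar>expected_dual p\<bar> \<le> dual_bound"
proof -
  have "AE z in D. \<bar>dual_value sel d p z\<bar> \<le> dual_bound"
    using users_AE by eventually_elim (rule dual_value_bound[OF assms])
  then show "integrable D (\<lambda>z. dual_value sel d p z)" and "\<bar>expected_dual p\<bar> \<le> dual_bound"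
    unfolding expected_dual_def
    using prob_space.integral_abs_le_const[OF D_prob dual_value_measurable_D] by auto
qed

lemma dual_inf_le: "price_region p \<Longrightarrow> dual_inf \<le> expected_dual p"
  unfolding dual_inf_def
  by (rule cInf_lower) (auto intro!: bdd_belowI[of _ "- dual_bound"] dest: expected_dual_bound(2))

lemma dual_inf_approx: "0 < e \<Longrightarrow> \<exists>p. price_region p \<and> expected_dual p < dual_inf + e"
  using cInf_lessD[of "expected_dual ` Collect price_region" "dual_inf + e"] price_region_p1
  unfolding dual_inf_def by auto

lemma users_AE_PiM: "finite I \<Longrightarrow> AE \<omega> in PiM I (\<lambda>_. D). \<forall>s\<in>I. \<omega> s \<in> user_box"
  using AE_PiM_all_components[OF D_prob _ users_AE] .

lemma expected_dual_value_fixed: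
  assumes ps: "price_region ps" and t: "t < n"
  shows "integrable (PiM {..<n} (\<lambda>_. D)) (\<lambda>\<omega>. dual_value sel d ps (\<omega> t))"
    and "(\<integral>\<omega>. dual_value sel d ps (\<omega> t) \<partial>PiM {..<n} (\<lambda>_. D)) = expected_dual ps"
proof -
  note component = integral_PiM_component[OF D_prob _ dual_value_measurable_D, of t "{..<n}" ps]
  show "integrable (PiM {..<n} (\<lambda>_. D)) (\<lambda>\<omega>. dual_value sel d ps (\<omega> t))"
    using component(2) expected_dual_bound(1)[OF ps] t by simp
  show "(\<integral>\<omega>. dual_value sel d ps (\<omega> t) \<partial>PiM {..<n} (\<lambda>_. D)) = expected_dual ps"
    using component(1) t unfolding expected_dual_def by simp
qed

lemma expected_dual_value_rp_price:
  assumes g: "0 < g" "g \<le> step_max" and t: "t < n"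
  shows "integrable (PiM {..<n} (\<lambda>_. D)) (\<lambda>\<omega>. dual_value sel d (rp_price sel p1 d g \<omega> t) (\<omega> t))"
    and "dual_inf \<le> (\<integral>\<omega>. dual_value sel d (rp_price sel p1 d g \<omega> t) (\<omega> t) \<partial>PiM {..<n} (\<lambda>_. D))"
proof -
  have t': "t \<in> {..<n}" using t by simp
  have fresh: "rp_price sel p1 d g (fun_upd \<omega> t y) t = rp_price sel p1 d g \<omega> t" for \<omega> y
    by (rule rp_price_cong) simp
  have meas: "(\<lambda>\<omega>. rp_price sel p1 d g \<omega> t) \<in> borel_measurable (PiM {..<n} (\<lambda>_. D))"
    "(\<lambda>\<omega>. rp_price sel p1 d g \<omega> t) \<in> borel_measurable (PiM ({..<n} - {t}) (\<lambda>_. D))"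
    using t by (auto intro: rp_price_measurable[OF sel_admissible D_sets])
  have region: "rp_price sel p1 d g \<omega> t \<in> Collect price_region"
    if "\<forall>s\<in>{..<n} - {t}. \<omega> s \<in> user_box" for \<omega>
    using that t by (auto intro: price_region_rp_price[OF g])
  have bounded: "\<bar>dual_value sel d p z\<bar> \<le> dual_bound" if "p \<in> Collect price_region" "z \<in> user_box" for p z
    using that dual_value_bound by simp
  have lower: "dual_inf \<le> (\<integral>z. dual_value sel d p z \<partial>D)" if "p \<in> Collect price_region" for p
    using that dual_inf_le unfolding expected_dual_def by simp
  note fresh_component = integral_PiM_fresh_component_ge[
      where \<phi> = "\<lambda>\<omega>. rp_price sel p1 d g \<omega> t" and f = "dual_value sel d",
      OF D_prob finite_lessThan t' fresh meas dual_value_measurable[OF sel_admissible D_sets]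
        users_AE region bounded lower]
  show "integrable (PiM {..<n} (\<lambda>_. D)) (\<lambda>\<omega>. dual_value sel d (rp_price sel p1 d g \<omega> t) (\<omega> t))"
    and "dual_inf \<le> (\<integral>\<omega>. dual_value sel d (rp_price sel p1 d g \<omega> t) (\<omega> t) \<partial>PiM {..<n} (\<lambda>_. D))"
    using fresh_component by simp_all
qed

lemma expected_dual_gap_le:
  fixes n :: nat
  assumes g: "0 < g" "g \<le> step_max" and ps: "price_region ps"
  defines "gap \<equiv> \<lambda>\<omega>. \<Sum>t<n. dual_value sel d ps (\<omega> t) - dual_value sel d (rp_price sel p1 d g \<omega> t) (\<omega> t)"
  shows "integrable (PiM {..<n} (\<lambda>_. D)) gap"
    and "(\<integral>\<omega>. gap \<omega> \<partial>PiM {..<n} (\<lambda>_. D)) \<le> real n * (expected_dual ps - dual_inf)"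
proof -
  let ?\<Omega> = "PiM {..<n} (\<lambda>_. D)" and ?p = "rp_price sel p1 d g"
  have diff: "integrable ?\<Omega> (\<lambda>\<omega>. dual_value sel d ps (\<omega> t) - dual_value sel d (?p \<omega> t) (\<omega> t))"
    "(\<integral>\<omega>. dual_value sel d ps (\<omega> t) - dual_value sel d (?p \<omega> t) (\<omega> t) \<partial>?\<Omega>)
       \<le> expected_dual ps - dual_inf" if "t < n" for t
    using expected_dual_value_fixed[OF ps that] expected_dual_value_rp_price[OF g that]
    by (auto simp: Bochner_Integration.integral_diff)
  then show "integrable ?\<Omega> gap"
    unfolding gap_def by (intro Bochner_Integration.integrable_sum) auto
  have "(\<integral>\<omega>. gap \<omega> \<partial>?\<Omega>)
      = (\<Sum>t<n. (\<integral>\<omega>. dual_value sel d ps (\<omega> t) - dual_value sel d (?p \<omega> t) (\<omega> t) \<partial>?\<Omega>))"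
    unfolding gap_def using diff(1) by (subst Bochner_Integration.integral_sum) auto
  also have "\<dots> \<le> (\<Sum>t<(n::nat). expected_dual ps - dual_inf)"
    using diff(2) by (intro sum_mono) auto
  finally show "(\<integral>\<omega>. gap \<omega> \<partial>?\<Omega>) \<le> real n * (expected_dual ps - dual_inf)" by simp
qed

lemma rp_regret_le_dual_gap:
  assumes g: "0 < g" "g \<le> step_max" and ps: "price_region ps"
  shows "rp_regret D sel p1 d g n \<le> real n * (expected_dual ps - dual_inf) + regret_bound g n"
proof -
  let ?\<Omega> = "PiM {..<n} (\<lambda>_. D)"
  interpret \<Omega>: prob_space ?\<Omega> using D_prob by (intro prob_space_PiM)
  define gap where "gap \<omega> = (\<Sum>t<n. dual_value sel d ps (\<omega> t)
    - dual_value sel d (rp_price sel p1 d g \<omega> t) (\<omega> t))" for \<omega>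
  note gap = expected_dual_gap_le[OF g ps, of n, folded gap_def]
  have "integrable ?\<Omega> (\<lambda>\<omega>. gap \<omega> + regret_bound g n)"
    using gap(1) by (intro Bochner_Integration.integrable_add \<Omega>.integrable_const)
  moreover have "AE \<omega> in ?\<Omega>. offline_opt d n \<omega> - online_util (rp_alloc sel p1 d g \<omega>) n \<omega>
      \<le> gap \<omega> + regret_bound g n"
    using users_AE_PiM[OF finite_lessThan]
    by eventually_elim (use regret_pathwise_le[OF ps g] gap_def in auto)
  moreover have "(\<integral>\<omega>. gap \<omega> + regret_bound g n \<partial>?\<Omega>) \<le> real n * (expected_dual ps - dual_inf) + regret_bound g n"
    using gap by (simp add: Bochner_Integration.integral_add[OF gap(1) \<Omega>.integrable_const] \<Omega>.prob_space)
  moreover have "0 \<le> real n * (expected_dual ps - dual_inf) + regret_bound g n"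
    using dual_inf_le[OF ps] g U_pos unfolding regret_bound_def by simp
  ultimately show ?thesis unfolding rp_regret_def by (rule integral_le_by_majorant)
qed

lemma rp_regret_le:
  assumes g: "0 < g" "g \<le> step_max"
  shows "rp_regret D sel p1 d g n \<le> regret_bound g n"
proof (rule field_le_epsilon)
  fix e :: real assume "0 < e"
  then obtain ps where ps: "price_region ps" "expected_dual ps < dual_inf + e / (real n + 1)"
    using dual_inf_approx[of "e / (real n + 1)"] by auto
  then have "real n * (expected_dual ps - dual_inf) \<le> real n * (e / (real n + 1))"
    by (intro mult_left_mono) auto
  also have "\<dots> \<le> e" using \<open>0 < e\<close> by (simp add: field_simps)
  finally show "rp_regret D sel p1 d g n \<le> regret_bound g n + e"
    using rp_regret_le_dual_gap[OF g ps(1), of n] by simp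
qed

lemma rp_violation_le:
  assumes g: "0 < g" "g \<le> step_max"
  shows "rp_violation D sel p1 d g n \<le> real CARD('m) * U / g"
proof -
  interpret \<Omega>: prob_space "PiM {..<n} (\<lambda>_. D)" using D_prob by (intro prob_space_PiM)
  have "AE \<omega> in PiM {..<n} (\<lambda>_. D).
      norm (violation_vec d (rp_alloc sel p1 d g \<omega>) n) \<le> real CARD('m) * U / g"
    using users_AE_PiM[OF finite_lessThan] by eventually_elim (rule violation_le[OF g], simp)
  then show ?thesis unfolding rp_violation_def
  proof (rule integral_le_by_majorant[OF \<Omega>.integrable_const])
    show "0 \<le> real CARD('m) * U / g" using U_pos g by simp
  qed (simp add: \<Omega>.prob_space)
qed

lemma regret_bound_sqrt:
  assumes "0 < Dbar" "0 < n"
  shows "regret_bound (Dbar / sqrt (real n)) n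
    = real CARD('m) * (U^2 / (2 * Dbar) + Dbar / 2 * (d_max + wu * K)^2) * sqrt (real n)"
proof -
  define s where "s = sqrt (real n)"
  have s: "0 < s" and n: "real n = s^2" using assms(2) unfolding s_def by simp_all
  show ?thesis unfolding regret_bound_def s_def[symmetric] n
    using s assms(1) by (simp add: field_simps power2_eq_square)
qed

lemma rp_regret_violation_sqrt:
  assumes Dbar: "0 < Dbar"
  shows "\<exists>C. eventually (\<lambda>n.
            rp_regret D sel p1 d (Dbar / sqrt (real n)) n \<le> C * sqrt (real n) \<and>
            rp_violation D sel p1 d (Dbar / sqrt (real n)) n \<le> C * sqrt (real n)) sequentially"
proof -
  define C where "C = max (real CARD('m) * (U^2 / (2 * Dbar) + Dbar / 2 * (d_max + wu * K)^2))
    (real CARD('m) * U / Dbar)"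
  have "(\<lambda>n. Dbar / sqrt (real n)) \<longlonglongrightarrow> 0"
    by (intro tendsto_divide_0[OF tendsto_const] filterlim_at_top_imp_at_infinity
        filterlim_compose[OF sqrt_at_top filterlim_real_sequentially])
  then have "eventually (\<lambda>n. 0 < n \<and> Dbar / sqrt (real n) < step_max) sequentially"
    using order_tendstoD(2)[OF _ step_max_pos] eventually_gt_at_top[of 0] eventually_conj by blast
  moreover have "rp_regret D sel p1 d (Dbar / sqrt (real n)) n \<le> C * sqrt (real n) \<and>
            rp_violation D sel p1 d (Dbar / sqrt (real n)) n \<le> C * sqrt (real n)"
    if n: "0 < n" "Dbar / sqrt (real n) < step_max" for n
  proof
    have g: "0 < Dbar / sqrt (real n)" "Dbar / sqrt (real n) \<le> step_max" using Dbar n by auto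
    have "real CARD('m) * (U^2 / (2 * Dbar) + Dbar / 2 * (d_max + wu * K)^2) * sqrt (real n)
        \<le> C * sqrt (real n)"
      unfolding C_def by (intro mult_right_mono) auto
    then show "rp_regret D sel p1 d (Dbar / sqrt (real n)) n \<le> C * sqrt (real n)"
      using rp_regret_le[OF g, of n] regret_bound_sqrt[OF Dbar n(1)] by linarith
    have "real CARD('m) * U / (Dbar / sqrt (real n)) = real CARD('m) * U / Dbar * sqrt (real n)"
      by simp
    also have "\<dots> \<le> C * sqrt (real n)" unfolding C_def by (intro mult_right_mono) auto
    finally show "rp_violation D sel p1 d (Dbar / sqrt (real n)) n \<le> C * sqrt (real n)"
      using rp_violation_le[OF g, of n] by linarith
  qed
  ultimately show ?thesis by (blast intro: eventually_mono)
qed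

end

theorem theorem3:
  fixes D :: "(real \<times> (real^'m)) measure"
    and d p1 ul uu :: "real^'m"
    and wl wu Dbar :: real
    and sel :: "real^'m \<Rightarrow> real \<Rightarrow> real^'m \<Rightarrow> real^'m"
  assumes D_prob: "prob_space D"
    and D_sets: "sets D = sets borel"
    and d_pos: "\<forall>j. 0 < d $ j"
    and p1_pos: "\<forall>j. 0 < p1 $ j"
    and pos_prob: "\<forall>j. measure D {z \<in> space D. 0 < snd z $ j} > 0"
    and ul_pos: "\<forall>j. 0 < ul $ j"
    and wl_pos: "0 < wl"
    and support: "AE z in D. wl \<le> fst z \<and> fst z \<le> wu \<and>
                    (\<forall>j. ul $ j \<le> snd z $ j \<and> snd z $ j \<le> uu $ j)"
    and Dbar_pos: "0 < Dbar"
    and sel: "admissible_rule sel"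
  shows "\<exists>C. eventually (\<lambda>n.
            rp_regret D sel p1 d (Dbar / sqrt (real n)) n \<le> C * sqrt (real n) \<and>
            rp_violation D sel p1 d (Dbar / sqrt (real n)) n \<le> C * sqrt (real n)) sequentially"
proof -
  define a where "a = Min (range (\<lambda>j. ul $ j))"
  define A where "A = Max (range (\<lambda>j. uu $ j))"
  have a: "a \<le> ul $ j" and A: "uu $ j \<le> A" for j unfolding a_def A_def by (auto intro: Min_le Max_ge)
  have "a \<in> range (\<lambda>j. ul $ j)" unfolding a_def by (rule Min_in) auto
  then have a_pos: "0 < a" using ul_pos by auto
  obtain z0 where z0: "wl \<le> fst z0" "fst z0 \<le> wu" "\<forall>j. ul $ j \<le> snd z0 $ j \<and> snd z0 $ j \<le> uu $ j"
    using eventually_happens'[OF prob_space.ae_filter_bot[OF D_prob] support] by blast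
  have box: "AE z in D. wl \<le> fst z \<and> fst z \<le> wu \<and> (\<forall>j. a \<le> snd z $ j \<and> snd z $ j \<le> A)"
    using support by eventually_elim (auto intro: order_trans[OF a] order_trans[OF _ A])
  have "a \<le> A" using a[of undefined] z0(3)[rule_format, of undefined] A[of undefined] by linarith
  interpret rp_market_iid d p1 wl wu a A sel D
  proof (intro rp_market_iid.intro rp_market.intro rp_market_iid_axioms.intro)
    show "wl \<le> wu" using z0 by linarith
    show "\<And>p w u. (\<exists>x. optimal_consumption p w u x) \<Longrightarrow> optimal_consumption p w u (sel p w u)"
      using sel unfolding admissible_rule_def by blast
  qed (fact d_pos p1_pos wl_pos a_pos \<open>a \<le> A\<close> D_prob D_sets sel box)+
  show ?thesis by (rule rp_regret_violation_sqrt[OF Dbar_pos])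
qed

end
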